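(* The intersection graph of $n$ horizontal and vertical line segments in the plane admits a $3$-hop spanner of size $O(n\log n)$.
   Context: The intersection graph has the segments as vertices, with an edge iff the two segments intersect. For a graph $G$ and integer $t\ge1$, a $t$-hop spanner is a subgraph $\widehat{G}$ of $G$ on the same vertex set such that for every edge $uv\in E(G)$ there is a $u$–$v$ path in $\widehat{G}$ with at most $t$ edges; its size is its number of edges. *)

theory Defs
  imports "HOL-Analysis.Analysis"
begin

type_synonym seg = "(real \<times> real) \<times> (real \<times> real)"

definition horizontal :: "seg \<Rightarrow> bool" where
  "horizontal s \<longleftrightarrow> snd (fst s) = snd (snd s)"

definition vertical :: "seg \<Rightarrow> bool" where
  "vertical s \<longleftrightarrow> fst (fst s) = fst (snd s)"

definition seg_points :: "seg \<Rightarrow> (real \<times> real) set" where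
  "seg_points s = closed_segment (fst s) (snd s)"

definition isect_edges :: "nat \<Rightarrow> (nat \<Rightarrow> seg) \<Rightarrow> nat set set" where
  "isect_edges n s = {{i, j} | i j. i < n \<and> j < n \<and> i \<noteq> j \<and>
      seg_points (s i) \<inter> seg_points (s j) \<noteq> {}}"

fun hop_reach :: "nat set set \<Rightarrow> nat \<Rightarrow> nat \<Rightarrow> nat \<Rightarrow> bool" where
  "hop_reach H 0 u v \<longleftrightarrow> u = v"
| "hop_reach H (Suc k) u v \<longleftrightarrow> hop_reach H k u v \<or> (\<exists>w. {u, w} \<in> H \<and> hop_reach H k w v)"

definition is_hop_spanner :: "nat set set \<Rightarrow> nat \<Rightarrow> nat set set \<Rightarrow> bool" where
  "is_hop_spanner E t H \<longleftrightarrow> H \<subseteq> E \<and> (\<forall>u v. {u, v} \<in> E \<longrightarrow> hop_reach H t u v)"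

end

theory Submission
  imports Defs "HOL-Library.Log_Nat"
begin

text \<open>
  Every edge of the intersection graph is a crossing of a vertical and a horizontal segment or
  an overlap of two parallel ones; in the latter case the low end of one segment lies on the
  other, and that endpoint is a degenerate segment which is both vertical and horizontal. So it
  suffices to join every crossing pair a, b of vertical segments A and horizontal segments B by
  a path a, b', a', b of crossing pairs taken from a set K of size O((|A| + |B|) log |A|).

  Ranking the x-coordinates of A, the x-range of each b splits into canonical dyadic blocks of
  ranks, at most two per level. Within a block the x-condition holds for all pairs, leaving the
  incidences between the y-intervals of the vertical segments in the block and the
  y-coordinates of the horizontal segments for which it is canonical. Over the O(log |A|)
  levels this gives the bound, provided this one-dimensional problem has a solution of linear
  size.

  For intervals and points on a line, pierce the inclusion-maximal intervals greedily so that
  every interval contains at most two piercing points. Each piercing point \<pi> gets two hubs, the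
  intervals through \<pi> reaching furthest left and furthest right, joined to all points they
  contain; every point then lies in at most eight hubs. Each interval a is joined to one point q
  of a, chosen to be the piercing point of a maximal interval around a if that lies in a; then
  one of the two hubs of this piercing point contains q and any given point of a.
\<close>

section \<open>Bipartite 3-hop spanners\<close>

definition bipartite_3hop_spanner :: "('a \<times> 'b) set \<Rightarrow> ('a \<times> 'b) set \<Rightarrow> bool" where
  "bipartite_3hop_spanner R K \<longleftrightarrow>
     K \<subseteq> R \<and> (\<forall>a b. (a, b) \<in> R \<longrightarrow> (\<exists>a' b'. (a, b') \<in> K \<and> (a', b') \<in> K \<and> (a', b) \<in> K))"

lemma bipartite_3hop_spanner_Un:
  "bipartite_3hop_spanner R K \<Longrightarrow> bipartite_3hop_spanner R' K' \<Longrightarrow>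
    bipartite_3hop_spanner (R \<union> R') (K \<union> K')"
  unfolding bipartite_3hop_spanner_def by blast

lemma bipartite_3hop_spanner_UN:
  "(\<And>i. i \<in> I \<Longrightarrow> bipartite_3hop_spanner (R i) (K i)) \<Longrightarrow>
    bipartite_3hop_spanner (\<Union>i\<in>I. R i) (\<Union>i\<in>I. K i)"
  unfolding bipartite_3hop_spanner_def by (simp add: UN_mono) (meson UN_iff)

section \<open>Intervals and points on a line\<close>

lemma card_tops_of_later_intervals_le_1:
  fixes lo hi :: "'a \<Rightarrow> real"
  assumes "finite Y" "finite T" "T \<subseteq> Y" "a \<in> G"
    and "\<And>c. c \<in> G \<Longrightarrow> {lo c..hi c} \<inter> Y \<noteq> {}"
    and "\<And>a c. a \<in> G \<Longrightarrow> c \<in> G \<Longrightarrow> lo c \<le> lo a \<Longrightarrow> hi a \<le> hi c \<Longrightarrow> lo c = lo a \<and> hi c = hi a"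
    and "\<And>u. u \<in> T \<Longrightarrow> \<exists>c\<in>G. lo a < lo c \<and> u = Max ({lo c..hi c} \<inter> Y)"
  shows "card ({lo a..hi a} \<inter> T) \<le> 1"
proof -
  text \<open>A larger top v would lie in the interval c of u as well, which reaches beyond a.\<close>
  have "\<not> u < v" if uv: "u \<in> {lo a..hi a} \<inter> T" "v \<in> {lo a..hi a} \<inter> T" for u v
  proof
    assume "u < v"
    obtain c where c: "c \<in> G" "lo a < lo c" "u = Max ({lo c..hi c} \<inter> Y)"
      using assms(7) uv(1) by blast
    have "u \<in> {lo c..hi c}"
      using Max_in[of "{lo c..hi c} \<inter> Y"] assms(1,5) c by auto
    moreover have "hi a < hi c"
      using assms(6)[OF c(1) assms(4)] c(2) by fastforce
    ultimately have "v \<in> {lo c..hi c} \<inter> Y"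
      using \<open>u < v\<close> uv(2) assms(3) by auto
    then have "v \<le> u"
      using assms(1) c(3) by simp
    with \<open>u < v\<close> show False
      by simp
  qed
  then show ?thesis
    using assms(2) by (subst One_nat_def, subst card_le_Suc0_iff_eq) (auto, meson linorder_neqE)
qed

lemma greedy_piercing:
  fixes lo hi :: "'a \<Rightarrow> real"
  assumes "finite G" "finite Y" "\<And>a. a \<in> G \<Longrightarrow> {lo a..hi a} \<inter> Y \<noteq> {}"
    and "\<And>a c. a \<in> G \<Longrightarrow> c \<in> G \<Longrightarrow> lo c \<le> lo a \<Longrightarrow> hi a \<le> hi c \<Longrightarrow> lo c = lo a \<and> hi c = hi a"
  shows "\<exists>Q\<subseteq>Y. (\<forall>a\<in>G. {lo a..hi a} \<inter> Q \<noteq> {} \<and> card ({lo a..hi a} \<inter> Q) \<le> 2) \<and>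
           (\<forall>q\<in>Q. \<exists>a\<in>G. q = Max ({lo a..hi a} \<inter> Y))"
  using assms
proof (induction "card G" arbitrary: G rule: less_induct)
  case less
  show ?case
  proof (cases "G = {}")
    case True
    then show ?thesis by auto
  next
    case False
    define top where "top a = Max ({lo a..hi a} \<inter> Y)" for a
    have top_in: "top a \<in> {lo a..hi a} \<inter> Y" if "a \<in> G" for a
      unfolding top_def using less.prems(2) less.prems(3)[OF that] by (intro Max_in) auto
    text \<open>Pierce with the lowest top point p; this pierces every interval starting at or
      before p, and the intervals starting after p are handled recursively.\<close>
    define p where "p = Min (top ` G)"
    have "p \<in> top ` G"
      unfolding p_def using less.prems(1) False by simp
    then obtain a0 where a0: "a0 \<in> G" "p = top a0"
      by auto
    have p_le: "p \<le> top a" if "a \<in> G" for a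
      unfolding p_def using less.prems(1) that by simp
    define G' where "G' = {a \<in> G. p < lo a}"
    have "a0 \<notin> G'"
      using a0 top_in[OF a0(1)] unfolding G'_def by auto
    then have "G' \<subset> G"
      using a0(1) unfolding G'_def by blast
    then have "card G' < card G"
      by (rule psubset_card_mono[OF less.prems(1)])
    then obtain Q' where Q': "Q' \<subseteq> Y"
        "\<forall>a\<in>G'. {lo a..hi a} \<inter> Q' \<noteq> {} \<and> card ({lo a..hi a} \<inter> Q') \<le> 2"
        "\<forall>q\<in>Q'. \<exists>a\<in>G'. q = top a"
      using less.hyps[of G'] less.prems unfolding G'_def top_def by auto
    have fin_Q': "finite Q'"
      using Q'(1) less.prems(2) by (rule finite_subset)
    have one: "card ({lo a..hi a} \<inter> Q') \<le> 1" if a: "a \<in> G" "lo a \<le> p" for a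
      using Q'(1,3) less.prems a(1) fin_Q' a(2)
      by (intro card_tops_of_later_intervals_le_1[where G = G and Y = Y]) (fastforce simp: G'_def top_def)+
    have "{lo a..hi a} \<inter> insert p Q' \<noteq> {} \<and> card ({lo a..hi a} \<inter> insert p Q') \<le> 2"
      if a: "a \<in> G" for a
    proof (cases "p < lo a")
      case True
      then show ?thesis
        using Q'(2) a unfolding G'_def by auto
    next
      case False
      have "p \<in> {lo a..hi a}"
        using False p_le[OF a] top_in[OF a] by auto
      moreover have "card ({lo a..hi a} \<inter> insert p Q') \<le> Suc (card ({lo a..hi a} \<inter> Q'))"
        using fin_Q' by (simp add: Int_insert_right card_insert_if)
      ultimately show ?thesis
        using one[OF a] False by auto
    qed
    moreover have "insert p Q' \<subseteq> Y"
      using Q'(1) a0 top_in by auto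
    moreover have "\<forall>q\<in>insert p Q'. \<exists>a\<in>G. q = Max ({lo a..hi a} \<inter> Y)"
      using Q'(3) a0 unfolding G'_def top_def by auto
    ultimately show ?thesis
      by blast
  qed
qed

lemma ex_maximal_interval_containing:
  fixes lo hi :: "'a \<Rightarrow> real"
  assumes "finite A" "a \<in> A"
  shows "\<exists>c\<in>A. lo c \<le> lo a \<and> hi a \<le> hi c \<and>
           (\<forall>c'\<in>A. lo c' \<le> lo c \<and> hi c \<le> hi c' \<longrightarrow> lo c' = lo c \<and> hi c' = hi c)"
proof -
  define S where "S = {c \<in> A. lo c \<le> lo a \<and> hi a \<le> hi c}"
  have "finite S" "a \<in> S"
    using assms by (auto simp: S_def)
  then obtain c where c: "c \<in> S" "hi c - lo c = Max ((\<lambda>c. hi c - lo c) ` S)"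
    using Max_in[of "(\<lambda>c. hi c - lo c) ` S"] by fastforce
  have "hi c' - lo c' \<le> hi c - lo c" if "c' \<in> S" for c'
    using c(2) \<open>finite S\<close> that by simp
  then show ?thesis
    using c(1) unfolding S_def by fastforce
qed

lemma sparse_piercing:
  fixes lo hi :: "'a \<Rightarrow> real"
  assumes "finite A" "finite Y" "\<And>a. a \<in> A \<Longrightarrow> {lo a..hi a} \<inter> Y \<noteq> {}"
  obtains Q where "Q \<subseteq> Y" "\<forall>a\<in>A. card ({lo a..hi a} \<inter> Q) \<le> 2"
    "\<forall>a\<in>A. \<exists>c\<in>A. lo c \<le> lo a \<and> hi a \<le> hi c \<and> {lo c..hi c} \<inter> Q \<noteq> {}"
    "\<forall>q\<in>Q. \<exists>a\<in>A. q \<in> {lo a..hi a}"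
proof -
  define G where
    "G = {a \<in> A. \<forall>c\<in>A. lo c \<le> lo a \<and> hi a \<le> hi c \<longrightarrow> lo c = lo a \<and> hi c = hi a}"
  have maximal: "\<exists>c\<in>G. lo c \<le> lo a \<and> hi a \<le> hi c" if "a \<in> A" for a
    using ex_maximal_interval_containing[OF assms(1) that, of lo hi] unfolding G_def by blast
  have "G \<subseteq> A"
    by (auto simp: G_def)
  have "finite G"
    using assms(1) by (simp add: G_def)
  moreover have "{lo a..hi a} \<inter> Y \<noteq> {}" if "a \<in> G" for a
    using assms(3) \<open>G \<subseteq> A\<close> that by blast
  moreover have "lo c = lo a \<and> hi c = hi a"
    if "a \<in> G" "c \<in> G" "lo c \<le> lo a" "hi a \<le> hi c" for a c
    using that \<open>G \<subseteq> A\<close> unfolding G_def by auto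
  ultimately obtain Q where Q: "Q \<subseteq> Y"
      "\<forall>a\<in>G. {lo a..hi a} \<inter> Q \<noteq> {} \<and> card ({lo a..hi a} \<inter> Q) \<le> 2"
      "\<forall>q\<in>Q. \<exists>a\<in>G. q = Max ({lo a..hi a} \<inter> Y)"
    using greedy_piercing[OF _ assms(2), of G lo hi] by blast
  show thesis
  proof (rule that[OF Q(1)]; intro ballI)
    show "card ({lo a..hi a} \<inter> Q) \<le> 2" if a: "a \<in> A" for a
    proof -
      obtain c where c: "c \<in> G" "lo c \<le> lo a" "hi a \<le> hi c"
        using maximal[OF a] by blast
      have "card ({lo a..hi a} \<inter> Q) \<le> card ({lo c..hi c} \<inter> Q)"
        using c finite_subset[OF Q(1) assms(2)] by (intro card_mono) auto
      with Q(2) c(1) show ?thesis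
        by fastforce
    qed
    show "\<exists>c\<in>A. lo c \<le> lo a \<and> hi a \<le> hi c \<and> {lo c..hi c} \<inter> Q \<noteq> {}" if "a \<in> A" for a
      using maximal[OF that] Q(2) \<open>G \<subseteq> A\<close> by blast
    show "\<exists>a\<in>A. q \<in> {lo a..hi a}" if q: "q \<in> Q" for q
    proof -
      obtain a where a: "a \<in> G" "q = Max ({lo a..hi a} \<inter> Y)"
        using Q(3) q by blast
      then have "a \<in> A"
        using \<open>G \<subseteq> A\<close> by blast
      then have "q \<in> {lo a..hi a} \<inter> Y"
        using a(2) assms(2,3) by (metis Max_in finite_Int)
      with \<open>a \<in> A\<close> show ?thesis
        by blast
    qed
  qed
qed

text \<open>The \<pi> \<ge> z whose intervals contain z all lie in the interval of the largest of them,
  and those below z in the interval of the smallest.\<close>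
lemma card_intervals_around_le_4:
  fixes l r :: "real \<Rightarrow> real"
  assumes "finite Q" and around: "\<And>\<pi>. \<pi> \<in> Q \<Longrightarrow> l \<pi> \<le> \<pi> \<and> \<pi> \<le> r \<pi>"
    and sparse: "\<And>\<pi>. \<pi> \<in> Q \<Longrightarrow> card ({l \<pi>..r \<pi>} \<inter> Q) \<le> 2"
  shows "card {\<pi> \<in> Q. l \<pi> \<le> z \<and> z \<le> r \<pi>} \<le> 4"
proof -
  have half: "card S \<le> 2" if "S \<subseteq> Q" "c \<in> S" "S \<subseteq> {l c..r c}" for S c
  proof -
    have "card S \<le> card ({l c..r c} \<inter> Q)"
      using that \<open>finite Q\<close> by (intro card_mono) auto
    also have "\<dots> \<le> 2"
      using that sparse by blast
    finally show ?thesis .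
  qed
  define S1 where "S1 = {\<pi> \<in> Q. l \<pi> \<le> z \<and> z \<le> r \<pi> \<and> z \<le> \<pi>}"
  define S2 where "S2 = {\<pi> \<in> Q. l \<pi> \<le> z \<and> z \<le> r \<pi> \<and> \<pi> < z}"
  have fin: "finite S1" "finite S2"
    using \<open>finite Q\<close> by (simp_all add: S1_def S2_def)
  have "card S1 \<le> 2"
  proof (cases "S1 = {}")
    case False
    with fin have "Max S1 \<in> S1" by simp
    moreover have "S1 \<subseteq> {l (Max S1)..r (Max S1)}"
    proof
      fix \<pi> assume "\<pi> \<in> S1"
      with fin have "\<pi> \<le> Max S1" by simp
      with \<open>\<pi> \<in> S1\<close> \<open>Max S1 \<in> S1\<close> around show "\<pi> \<in> {l (Max S1)..r (Max S1)}"
        unfolding S1_def by force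
    qed
    ultimately show ?thesis
      using half[of S1 "Max S1"] by (auto simp: S1_def)
  qed simp
  moreover have "card S2 \<le> 2"
  proof (cases "S2 = {}")
    case False
    with fin have "Min S2 \<in> S2" by simp
    moreover have "S2 \<subseteq> {l (Min S2)..r (Min S2)}"
    proof
      fix \<pi> assume "\<pi> \<in> S2"
      with fin have "Min S2 \<le> \<pi>" by simp
      with \<open>\<pi> \<in> S2\<close> \<open>Min S2 \<in> S2\<close> around show "\<pi> \<in> {l (Min S2)..r (Min S2)}"
        unfolding S2_def by force
    qed
    ultimately show ?thesis
      using half[of S2 "Min S2"] by (auto simp: S2_def)
  qed simp
  moreover have "{\<pi> \<in> Q. l \<pi> \<le> z \<and> z \<le> r \<pi>} = S1 \<union> S2"
    by (auto simp: S1_def S2_def)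
  ultimately show ?thesis
    using card_Un_le[of S1 S2] by simp
qed

lemma interval_hubs:
  fixes lo hi :: "'a \<Rightarrow> real"
  assumes "finite A" "finite Y" "\<And>a. a \<in> A \<Longrightarrow> {lo a..hi a} \<inter> Y \<noteq> {}"
  obtains Q lhub rhub anchor where "Q \<subseteq> Y"
    "\<forall>\<pi>\<in>Q. lhub \<pi> \<in> A \<and> lo (lhub \<pi>) \<le> \<pi> \<and> \<pi> \<le> hi (lhub \<pi>)"
    "\<forall>\<pi>\<in>Q. rhub \<pi> \<in> A \<and> lo (rhub \<pi>) \<le> \<pi> \<and> \<pi> \<le> hi (rhub \<pi>)"
    "\<forall>a\<in>A. anchor a \<in> Q \<and> lo (lhub (anchor a)) \<le> lo a \<and> hi a \<le> hi (rhub (anchor a))"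
    "\<forall>z. card {\<pi> \<in> Q. lo (lhub \<pi>) \<le> z \<and> z \<le> hi (lhub \<pi>)} \<le> 4"
    "\<forall>z. card {\<pi> \<in> Q. lo (rhub \<pi>) \<le> z \<and> z \<le> hi (rhub \<pi>)} \<le> 4"
proof -
  obtain Q where Q: "Q \<subseteq> Y" "\<forall>a\<in>A. card ({lo a..hi a} \<inter> Q) \<le> 2"
      "\<forall>a\<in>A. \<exists>c\<in>A. lo c \<le> lo a \<and> hi a \<le> hi c \<and> {lo c..hi c} \<inter> Q \<noteq> {}"
      "\<forall>q\<in>Q. \<exists>a\<in>A. q \<in> {lo a..hi a}"
    by (rule sparse_piercing[OF assms])
  have "finite Q"
    using Q(1) assms(2) by (rule finite_subset)
  define around where "around \<pi> = {c \<in> A. lo c \<le> \<pi> \<and> \<pi> \<le> hi c}" for \<pi>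
  have around: "finite (around \<pi>)" "around \<pi> \<noteq> {}" if "\<pi> \<in> Q" for \<pi>
    using assms(1) Q(4) that by (auto simp: around_def)
  have "\<forall>\<pi>\<in>Q. \<exists>l. l \<in> around \<pi> \<and> (\<forall>c\<in>around \<pi>. lo l \<le> lo c)"
    using ex_is_arg_min_if_finite[OF around, of _ lo] by (auto simp: is_arg_min_linorder Ball_def)
  then obtain lhub where lhub: "\<forall>\<pi>\<in>Q. lhub \<pi> \<in> around \<pi> \<and> (\<forall>c\<in>around \<pi>. lo (lhub \<pi>) \<le> lo c)"
    by (rule bchoice[THEN exE])
  have "\<forall>\<pi>\<in>Q. \<exists>r. r \<in> around \<pi> \<and> (\<forall>c\<in>around \<pi>. hi c \<le> hi r)"
    using ex_is_arg_min_if_finite[OF around, of _ "\<lambda>c. - hi c"] by (auto simp: is_arg_min_linorder Ball_def)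
  then obtain rhub where rhub: "\<forall>\<pi>\<in>Q. rhub \<pi> \<in> around \<pi> \<and> (\<forall>c\<in>around \<pi>. hi c \<le> hi (rhub \<pi>))"
    by (rule bchoice[THEN exE])
  have "\<forall>a\<in>A. \<exists>\<pi>. \<pi> \<in> Q \<and> lo (lhub \<pi>) \<le> lo a \<and> hi a \<le> hi (rhub \<pi>)"
  proof
    fix a assume "a \<in> A"
    from bspec[OF Q(3) this] obtain c
      where c: "c \<in> A" "lo c \<le> lo a \<and> hi a \<le> hi c \<and> {lo c..hi c} \<inter> Q \<noteq> {}" ..
    then obtain \<pi> where "\<pi> \<in> {lo c..hi c} \<inter> Q"
      by (meson ex_in_conv)
    then have "\<pi> \<in> Q" "c \<in> around \<pi>"
      using c(1) unfolding around_def by auto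
    then have "lo (lhub \<pi>) \<le> lo a" "hi a \<le> hi (rhub \<pi>)"
      using lhub rhub c(2) by force+
    with \<open>\<pi> \<in> Q\<close> show "\<exists>\<pi>. \<pi> \<in> Q \<and> lo (lhub \<pi>) \<le> lo a \<and> hi a \<le> hi (rhub \<pi>)"
      by auto
  qed
  then obtain anchor
    where anchor: "\<forall>a\<in>A. anchor a \<in> Q \<and> lo (lhub (anchor a)) \<le> lo a \<and> hi a \<le> hi (rhub (anchor a))"
    by (rule bchoice[THEN exE])
  show thesis
  proof (rule that[OF Q(1) _ _ anchor]; intro ballI allI)
    show "lhub \<pi> \<in> A \<and> lo (lhub \<pi>) \<le> \<pi> \<and> \<pi> \<le> hi (lhub \<pi>)"
      and "rhub \<pi> \<in> A \<and> lo (rhub \<pi>) \<le> \<pi> \<and> \<pi> \<le> hi (rhub \<pi>)" if "\<pi> \<in> Q" for \<pi>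
      using lhub rhub that by (auto simp: around_def)
    show "card {\<pi> \<in> Q. lo (lhub \<pi>) \<le> z \<and> z \<le> hi (lhub \<pi>)} \<le> 4"
      and "card {\<pi> \<in> Q. lo (rhub \<pi>) \<le> z \<and> z \<le> hi (rhub \<pi>)} \<le> 4" for z
      using lhub rhub Q(2) unfolding around_def
      by (intro card_intervals_around_le_4[OF \<open>finite Q\<close>]; force)+
  qed
qed

lemma card_le_mult_if_fibres_le:
  assumes "finite B" "snd ` S \<subseteq> B" "\<And>b. b \<in> B \<Longrightarrow> card {a. (a, b) \<in> S} \<le> c"
  shows "card S \<le> c * card B"
proof -
  have "S = (\<Union>b\<in>B. (\<lambda>a. (a, b)) ` {a. (a, b) \<in> S})"
    using assms(2) by (auto simp: image_iff)
  then have "card S \<le> (\<Sum>b\<in>B. card ((\<lambda>a. (a, b)) ` {a. (a, b) \<in> S}))"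
    using card_UN_le[OF assms(1)] by (rule ord_eq_le_trans[OF arg_cong[where f = card]])
  also have "\<dots> = (\<Sum>b\<in>B. card {a. (a, b) \<in> S})"
    by (intro sum.cong refl card_image) (simp add: inj_on_def)
  also have "\<dots> \<le> c * card B"
    using sum_bounded_above[of B "\<lambda>b. card {a. (a, b) \<in> S}" c] assms(3)
    by (simp add: mult.commute)
  finally show ?thesis .
qed

lemma card_hub_incidences_le:
  fixes lo hi :: "'a \<Rightarrow> real" and y :: "'b \<Rightarrow> real"
  assumes "finite B" "finite Q"
    and "\<forall>z. card {\<pi> \<in> Q. lo (lhub \<pi>) \<le> z \<and> z \<le> hi (lhub \<pi>)} \<le> 4"
    and "\<forall>z. card {\<pi> \<in> Q. lo (rhub \<pi>) \<le> z \<and> z \<le> hi (rhub \<pi>)} \<le> 4"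
  shows "card {(c, b). c \<in> lhub ` Q \<union> rhub ` Q \<and> b \<in> B \<and> lo c \<le> y b \<and> y b \<le> hi c} \<le> 8 * card B"
    (is "card ?S \<le> _")
proof (rule card_le_mult_if_fibres_le[OF assms(1)])
  show "snd ` ?S \<subseteq> B"
    by auto
  fix b
  define L where "L = {\<pi> \<in> Q. lo (lhub \<pi>) \<le> y b \<and> y b \<le> hi (lhub \<pi>)}"
  define L' where "L' = {\<pi> \<in> Q. lo (rhub \<pi>) \<le> y b \<and> y b \<le> hi (rhub \<pi>)}"
  have fin: "finite L" "finite L'"
    using assms(2) by (simp_all add: L_def L'_def)
  have "{c. (c, b) \<in> ?S} \<subseteq> lhub ` L \<union> rhub ` L'"
    unfolding L_def L'_def by auto
  then have "card {c. (c, b) \<in> ?S} \<le> card (lhub ` L \<union> rhub ` L')"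
    using fin by (intro card_mono) auto
  also have "\<dots> \<le> card L + card L'"
    using card_Un_le[of "lhub ` L" "rhub ` L'"] card_image_le[OF fin(1), of lhub]
      card_image_le[OF fin(2), of rhub] by linarith
  also have "\<dots> \<le> 8"
    using assms(3,4)[rule_format, of "y b"] unfolding L_def L'_def by linarith
  finally show "card {c. (c, b) \<in> ?S} \<le> 8" .
qed

text \<open>The left hub of the anchor \<pi> covers the part of the interval below \<pi>, the right hub
  the part above it.\<close>
lemma anchor_hub_covers:
  fixes la ha ll hl lr hr \<pi> q z :: real
  assumes "ll \<le> la" "\<pi> \<le> hl" "lr \<le> \<pi>" "ha \<le> hr"
    and "la \<le> q" "q \<le> ha" "la \<le> \<pi> \<and> \<pi> \<le> ha \<longrightarrow> q = \<pi>" and "la \<le> z" "z \<le> ha"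
  shows "ll \<le> q \<and> q \<le> hl \<and> ll \<le> z \<and> z \<le> hl \<or> lr \<le> q \<and> q \<le> hr \<and> lr \<le> z \<and> z \<le> hr"
  using assms by (cases "la \<le> \<pi> \<and> \<pi> \<le> ha") auto

lemma interval_point_bispanner:
  fixes lo hi :: "'a \<Rightarrow> real" and y :: "'b \<Rightarrow> real"
  assumes "finite A" "finite B"
  shows "\<exists>K. bipartite_3hop_spanner {(a, b) \<in> A \<times> B. lo a \<le> y b \<and> y b \<le> hi a} K \<and>
             card K \<le> card A + 8 * card B"
proof -
  define R where "R = {(a, b) \<in> A \<times> B. lo a \<le> y b \<and> y b \<le> hi a}"
  define A' where "A' = {a \<in> A. {lo a..hi a} \<inter> y ` B \<noteq> {}}"
  have "finite A'"
    using assms(1) by (simp add: A'_def)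
  have "{lo a..hi a} \<inter> y ` B \<noteq> {}" if "a \<in> A'" for a
    using that by (simp add: A'_def)
  then obtain Q lhub rhub \<pi> where "Q \<subseteq> y ` B"
    and lhub: "\<forall>\<pi>\<in>Q. lhub \<pi> \<in> A' \<and> lo (lhub \<pi>) \<le> \<pi> \<and> \<pi> \<le> hi (lhub \<pi>)"
    and rhub: "\<forall>\<pi>\<in>Q. rhub \<pi> \<in> A' \<and> lo (rhub \<pi>) \<le> \<pi> \<and> \<pi> \<le> hi (rhub \<pi>)"
    and \<pi>: "\<forall>a\<in>A'. \<pi> a \<in> Q \<and> lo (lhub (\<pi> a)) \<le> lo a \<and> hi a \<le> hi (rhub (\<pi> a))"
    and ply: "\<forall>z. card {\<pi> \<in> Q. lo (lhub \<pi>) \<le> z \<and> z \<le> hi (lhub \<pi>)} \<le> 4"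
      "\<forall>z. card {\<pi> \<in> Q. lo (rhub \<pi>) \<le> z \<and> z \<le> hi (rhub \<pi>)} \<le> 4"
    by (rule interval_hubs[OF \<open>finite A'\<close> finite_imageI[OF assms(2)]])
  have "\<exists>b. b \<in> B \<and> lo a \<le> y b \<and> y b \<le> hi a \<and> (lo a \<le> \<pi> a \<and> \<pi> a \<le> hi a \<longrightarrow> y b = \<pi> a)"
    if "a \<in> A'" for a
    using that \<pi> \<open>Q \<subseteq> y ` B\<close> unfolding A'_def by (cases "lo a \<le> \<pi> a \<and> \<pi> a \<le> hi a") fastforce+
  then have "\<forall>a\<in>A'. \<exists>b. b \<in> B \<and> lo a \<le> y b \<and> y b \<le> hi a \<and> (lo a \<le> \<pi> a \<and> \<pi> a \<le> hi a \<longrightarrow> y b = \<pi> a)"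
    by blast
  then obtain att where att:
    "\<forall>a\<in>A'. att a \<in> B \<and> lo a \<le> y (att a) \<and> y (att a) \<le> hi a \<and>
       (lo a \<le> \<pi> a \<and> \<pi> a \<le> hi a \<longrightarrow> y (att a) = \<pi> a)"
    by (rule bchoice[THEN exE])
  define Hub where "Hub = lhub ` Q \<union> rhub ` Q"
  define K where "K = {(c, b). c \<in> Hub \<and> b \<in> B \<and> lo c \<le> y b \<and> y b \<le> hi c} \<union> (\<lambda>a. (a, att a)) ` A'"
  have "Hub \<subseteq> A'"
    using lhub rhub unfolding Hub_def by auto
  have "bipartite_3hop_spanner R K"
    unfolding bipartite_3hop_spanner_def
  proof (intro conjI allI impI)
    show "K \<subseteq> R"
      using att \<open>Hub \<subseteq> A'\<close> unfolding K_def R_def A'_def by auto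
    fix a b assume "(a, b) \<in> R"
    then have a: "a \<in> A'" and b: "b \<in> B" "lo a \<le> y b" "y b \<le> hi a"
      unfolding R_def A'_def by auto
    have "lhub (\<pi> a) \<in> Hub" "rhub (\<pi> a) \<in> Hub"
      using \<pi> a unfolding Hub_def by auto
    moreover have "(a, att a) \<in> K" "att a \<in> B"
      using a att unfolding K_def by auto
    moreover have "\<exists>c\<in>{lhub (\<pi> a), rhub (\<pi> a)}.
        lo c \<le> y (att a) \<and> y (att a) \<le> hi c \<and> lo c \<le> y b \<and> y b \<le> hi c"
      using anchor_hub_covers[of "lo (lhub (\<pi> a))" "lo a" "\<pi> a" "hi (lhub (\<pi> a))"
          "lo (rhub (\<pi> a))" "hi a" "hi (rhub (\<pi> a))" "y (att a)" "y b"]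
        \<pi> lhub rhub att a b by auto
    ultimately show "\<exists>a' b'. (a, b') \<in> K \<and> (a', b') \<in> K \<and> (a', b) \<in> K"
      using b(1) unfolding K_def by blast
  qed
  moreover have "card K \<le> card A + 8 * card B"
  proof -
    have "finite Q"
      using \<open>Q \<subseteq> y ` B\<close> assms(2) finite_surj by blast
    have "card {(c, b). c \<in> Hub \<and> b \<in> B \<and> lo c \<le> y b \<and> y b \<le> hi c} \<le> 8 * card B"
      unfolding Hub_def by (rule card_hub_incidences_le[OF assms(2) \<open>finite Q\<close> ply])
    moreover have "card ((\<lambda>a. (a, att a)) ` A') \<le> card A'"
      by (rule card_image_le[OF \<open>finite A'\<close>])
    moreover have "card A' \<le> card A"
      using assms(1) by (rule card_mono) (auto simp: A'_def)
    ultimately show ?thesis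
      unfolding K_def
      using card_Un_le[of "{(c, b). c \<in> Hub \<and> b \<in> B \<and> lo c \<le> y b \<and> y b \<le> hi c}"]
      by (smt (verit) add.commute add_le_mono le_trans)
  qed
  ultimately show ?thesis
    unfolding R_def by (intro exI[of _ K]) simp
qed

section \<open>Dyadic decomposition\<close>

text \<open>Integer intervals are half-open, [lo, hi); the dyadic block k of level j is
  [k 2^j, (k + 1) 2^j), and it is canonical for [lo, hi) if it is a maximal dyadic block inside.\<close>
definition dyadic_block_inside :: "nat \<Rightarrow> nat \<Rightarrow> nat \<Rightarrow> nat \<Rightarrow> bool" where
  "dyadic_block_inside lo hi j k \<longleftrightarrow> lo \<le> k * 2 ^ j \<and> (k + 1) * 2 ^ j \<le> hi"

definition canonical_block :: "nat \<Rightarrow> nat \<Rightarrow> nat \<Rightarrow> nat \<Rightarrow> bool" where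
  "canonical_block lo hi j k \<longleftrightarrow>
     dyadic_block_inside lo hi j k \<and> \<not> dyadic_block_inside lo hi (Suc j) (k div 2)"

lemma in_interval_if_dyadic_block_inside:
  assumes "dyadic_block_inside lo hi j (r div 2 ^ j)"
  shows "lo \<le> r \<and> r < hi"
proof -
  have "r div 2 ^ j * 2 ^ j \<le> r" "r < (r div 2 ^ j + 1) * 2 ^ j"
    by (simp_all add: div_times_less_eq_dividend dividend_less_div_times)
  with assms show ?thesis
    unfolding dyadic_block_inside_def by linarith
qed

lemma canonical_block_containing:
  assumes "lo \<le> r" "r < hi"
  obtains j where "canonical_block lo hi j (r div 2 ^ j)" "2 ^ j \<le> hi"
proof -
  define P where "P j \<longleftrightarrow> dyadic_block_inside lo hi j (r div 2 ^ j)" for j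
  have "P 0"
    using assms by (simp add: P_def dyadic_block_inside_def)
  have bounded: "2 ^ j \<le> hi" if "P j" for j
    using that le_add2[of "2 ^ j" "r div 2 ^ j * 2 ^ j"]
    unfolding P_def dyadic_block_inside_def by (simp add: algebra_simps)
  have "\<forall>j. P j \<longrightarrow> j \<le> hi"
    using bounded less_exp by (meson le_trans less_imp_le_nat)
  then obtain j where "P j" "\<forall>j'. P j' \<longrightarrow> j' \<le> j"
    using Nat.ex_has_greatest_nat[of P 0 hi] \<open>P 0\<close> by blast
  then have "\<not> P (Suc j)"
    by fastforce
  moreover have "r div 2 ^ j div 2 = r div 2 ^ Suc j"
    by (simp only: power_Suc2 div_mult2_eq)
  ultimately have "canonical_block lo hi j (r div 2 ^ j)"
    using \<open>P j\<close> by (simp add: canonical_block_def P_def)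
  with bounded[OF \<open>P j\<close>] show ?thesis
    using that by blast
qed

text \<open>At each level only the two blocks at the ends of the interval can be canonical: an even
  block whose parent sticks out must end within one block of hi, an odd one must start within
  one block of lo.\<close>
lemma canonical_blocks_at_level:
  "{k. canonical_block lo hi j k} \<subseteq> {hi div 2 ^ j - 1, (lo + 2 ^ j - 1) div 2 ^ j}"
proof
  fix k assume "k \<in> {k. canonical_block lo hi j k}"
  define d :: nat where "d = 2 ^ j"
  have "d > 0"
    by (simp add: d_def)
  have k: "lo \<le> k * d" "(k + 1) * d \<le> hi" "\<not> (lo \<le> k div 2 * (2 * d) \<and> (k div 2 + 1) * (2 * d) \<le> hi)"
    using \<open>k \<in> _\<close> by (simp_all add: canonical_block_def dyadic_block_inside_def d_def mult.commute)
  show "k \<in> {hi div 2 ^ j - 1, (lo + 2 ^ j - 1) div 2 ^ j}"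
  proof (cases "even k")
    case True
    then have e: "k div 2 * (2 * d) = k * d" "(k div 2 + 1) * (2 * d) = (k + 2) * d"
      by (auto simp: algebra_simps)
    have "\<not> (lo \<le> k * d \<and> (k + 2) * d \<le> hi)"
      using k(3) unfolding e .
    with k(1) have "hi < (k + 2) * d"
      by auto
    with k(2) have "hi div d = k + 1"
      by (intro div_nat_eqI) (auto simp: algebra_simps)
    then show ?thesis
      by (simp add: d_def)
  next
    case False
    then have e: "k div 2 * (2 * d) = (k - 1) * d" "(k div 2 + 1) * (2 * d) = (k + 1) * d"
      by (auto simp: algebra_simps elim!: oddE)
    have "\<not> (lo \<le> (k - 1) * d \<and> (k + 1) * d \<le> hi)"
      using k(3) unfolding e .
    with k(2) have "(k - 1) * d < lo"
      by auto
    moreover have "(k - 1) * d + d = k * d"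
      using False by (cases k) (auto simp: algebra_simps)
    ultimately have "(lo + d - 1) div d = k"
      using k(1) \<open>d > 0\<close> by (intro div_nat_eqI) (auto simp: algebra_simps)
    then show ?thesis
      by (simp add: d_def)
  qed
qed

lemma card_canonical_blocks_at_level: "card {k. canonical_block lo hi j k} \<le> 2"
proof -
  have "card {k. canonical_block lo hi j k} \<le> card {hi div 2 ^ j - 1, (lo + 2 ^ j - 1) div 2 ^ j}"
    by (rule card_mono[OF _ canonical_blocks_at_level]) simp
  also have "\<dots> \<le> 2"
    by (simp add: card_insert_if)
  finally show ?thesis .
qed

lemma less_floorlog_2_iff: "j < floorlog 2 N \<longleftrightarrow> 2 ^ j \<le> N"
  using floorlog_le_iff[of 2 N j] by auto

lemma mem_interval_iff_canonical_block:
  assumes "r < N" "hi \<le> N"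
  shows "lo \<le> r \<and> r < hi \<longleftrightarrow> (\<exists>j<floorlog 2 N. canonical_block lo hi j (r div 2 ^ j))"
proof
  assume "lo \<le> r \<and> r < hi"
  then obtain j where "canonical_block lo hi j (r div 2 ^ j)" "2 ^ j \<le> hi"
    by (metis canonical_block_containing)
  with assms(2) show "\<exists>j<floorlog 2 N. canonical_block lo hi j (r div 2 ^ j)"
    by (meson le_trans less_floorlog_2_iff)
next
  assume "\<exists>j<floorlog 2 N. canonical_block lo hi j (r div 2 ^ j)"
  then show "lo \<le> r \<and> r < hi"
    using in_interval_if_dyadic_block_inside unfolding canonical_block_def by blast
qed

lemma canonical_blocks_below_level:
  "{(j, k). j < L \<and> canonical_block lo hi j k} = (\<Union>j<L. {j} \<times> {k. canonical_block lo hi j k})"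
  by auto

lemma finite_canonical_blocks: "finite {(j, k). j < L \<and> canonical_block lo hi j k}"
  unfolding canonical_blocks_below_level
  by (intro finite_UN_I finite_lessThan finite_cartesian_product finite.insertI finite.emptyI
      finite_subset[OF canonical_blocks_at_level])

lemma card_canonical_blocks_le: "card {(j, k). j < L \<and> canonical_block lo hi j k} \<le> 2 * L"
proof -
  have "card {(j, k). j < L \<and> canonical_block lo hi j k} \<le>
      (\<Sum>j<L. card ({j} \<times> {k. canonical_block lo hi j k}))"
    unfolding canonical_blocks_below_level by (rule card_UN_le) simp
  also have "\<dots> \<le> (\<Sum>j<L. 2)"
    by (intro sum_mono) (simp add: card_cartesian_product card_canonical_blocks_at_level)
  finally show ?thesis
    by simp
qed

lemma sum_card_dyadic_classes:
  fixes r :: "'a \<Rightarrow> nat"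
  assumes "finite A" "\<forall>a\<in>A. r a < N"
  shows "(\<Sum>(j, k)\<in>{..<L} \<times> {..<N}. card {a \<in> A. r a div 2 ^ j = k}) = L * card A"
proof -
  have "(\<Sum>k<N. card {a \<in> A. r a div 2 ^ j = k}) = card A" for j
  proof -
    have "(\<lambda>a. r a div 2 ^ j) ` A \<subseteq> {..<N}"
      using assms(2) by (auto intro: le_less_trans[OF div_le_dividend])
    then show ?thesis
      using sum.group[OF assms(1) finite_lessThan[of N], where g = "\<lambda>a. r a div 2 ^ j" and h = "\<lambda>_. 1 :: nat"]
      by simp
  qed
  then show ?thesis
    by (simp add: sum.cartesian_product[symmetric])
qed

lemma sum_card_canonical_classes_le:
  fixes lo hi :: "'b \<Rightarrow> nat"
  assumes "finite B"
  shows "(\<Sum>(j, k)\<in>{..<L} \<times> {..<N}. card {b \<in> B. canonical_block (lo b) (hi b) j k}) \<le> 2 * L * card B"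
proof -
  define S where "S = (SIGMA (j, k):{..<L} \<times> {..<N}. {b \<in> B. canonical_block (lo b) (hi b) j k})"
  have "(\<Sum>(j, k)\<in>{..<L} \<times> {..<N}. card {b \<in> B. canonical_block (lo b) (hi b) j k}) = card S"
    using assms by (simp add: S_def split_def)
  also have "\<dots> \<le> (2 * L) * card B"
  proof (rule card_le_mult_if_fibres_le[OF assms])
    show "snd ` S \<subseteq> B"
      by (auto simp: S_def)
    fix b
    have "{jk. (jk, b) \<in> S} \<subseteq> {(j, k). j < L \<and> canonical_block (lo b) (hi b) j k}"
      by (auto simp: S_def)
    then have "card {jk. (jk, b) \<in> S} \<le> card {(j, k). j < L \<and> canonical_block (lo b) (hi b) j k}"
      by (rule card_mono[OF finite_canonical_blocks])
    also have "\<dots> \<le> 2 * L"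
      by (rule card_canonical_blocks_le)
    finally show "card {jk. (jk, b) \<in> S} \<le> 2 * L" .
  qed
  finally show ?thesis
    by simp
qed

lemma dyadic_grid_bispanner:
  fixes r :: "'a \<Rightarrow> nat" and lo hi :: "'b \<Rightarrow> nat"
    and ylo yhi :: "'a \<Rightarrow> real" and y :: "'b \<Rightarrow> real"
  assumes "finite A" "finite B" "\<forall>a\<in>A. r a < N" "\<forall>b\<in>B. hi b \<le> N"
  shows "\<exists>K. bipartite_3hop_spanner
               {(a, b) \<in> A \<times> B. lo b \<le> r a \<and> r a < hi b \<and> ylo a \<le> y b \<and> y b \<le> yhi a} K \<and>
             card K \<le> (card A + 16 * card B) * floorlog 2 N"
proof -
  define L where "L = floorlog 2 N"
  define Idx where "Idx = {..<L} \<times> {..<N}"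
  define Ab where "Ab j k = {a \<in> A. r a div 2 ^ j = k}" for j k
  define Bb where "Bb j k = {b \<in> B. canonical_block (lo b) (hi b) j k}" for j k
  define Rb where "Rb j k = {(a, b) \<in> Ab j k \<times> Bb j k. ylo a \<le> y b \<and> y b \<le> yhi a}" for j k
  have "finite (Ab j k)" "finite (Bb j k)" for j k
    using assms(1,2) by (simp_all add: Ab_def Bb_def)
  then have "\<forall>j k. \<exists>K. bipartite_3hop_spanner (Rb j k) K \<and> card K \<le> card (Ab j k) + 8 * card (Bb j k)"
    unfolding Rb_def using interval_point_bispanner by blast
  then obtain Kb where Kb: "\<And>j k. bipartite_3hop_spanner (Rb j k) (Kb j k)"
      "\<And>j k. card (Kb j k) \<le> card (Ab j k) + 8 * card (Bb j k)"
    by metis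
  have blocks: "(a, b) \<in> (\<Union>(j, k)\<in>Idx. Rb j k) \<longleftrightarrow> a \<in> A \<and> b \<in> B \<and>
      (\<exists>j<L. canonical_block (lo b) (hi b) j (r a div 2 ^ j)) \<and> ylo a \<le> y b \<and> y b \<le> yhi a" for a b
  proof -
    have "r a div 2 ^ j < N" if "a \<in> A" for j
      using assms(3) that div_le_dividend le_less_trans by blast
    then show ?thesis
      by (simp add: Idx_def Rb_def Ab_def Bb_def) blast
  qed
  have interval: "lo b \<le> r a \<and> r a < hi b \<longleftrightarrow> (\<exists>j<L. canonical_block (lo b) (hi b) j (r a div 2 ^ j))"
    if "a \<in> A" "b \<in> B" for a b
    using assms(3,4) that unfolding L_def by (intro mem_interval_iff_canonical_block) auto
  have "{(a, b) \<in> A \<times> B. lo b \<le> r a \<and> r a < hi b \<and> ylo a \<le> y b \<and> y b \<le> yhi a} =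
      (\<Union>(j, k)\<in>Idx. Rb j k)" (is "?R = _")
  proof (rule set_eqI)
    fix p :: "'a \<times> 'b"
    show "p \<in> ?R \<longleftrightarrow> p \<in> (\<Union>(j, k)\<in>Idx. Rb j k)"
      using blocks[of "fst p" "snd p"] interval[of "fst p" "snd p"] by (cases p) auto
  qed
  moreover have "card (\<Union>(j, k)\<in>Idx. Kb j k) \<le> (card A + 16 * card B) * L"
  proof -
    have "card (\<Union>(j, k)\<in>Idx. Kb j k) \<le> (\<Sum>(j, k)\<in>Idx. card (Kb j k))"
      by (rule order_trans[OF card_UN_le]) (simp_all add: Idx_def split_def)
    also have "\<dots> \<le> (\<Sum>(j, k)\<in>Idx. card (Ab j k) + 8 * card (Bb j k))"
      by (rule sum_mono) (simp add: split_def Kb(2))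
    also have "\<dots> = (\<Sum>(j, k)\<in>Idx. card (Ab j k)) + 8 * (\<Sum>(j, k)\<in>Idx. card (Bb j k))"
      by (simp add: split_def sum.distrib sum_distrib_left)
    also have "\<dots> \<le> (card A + 16 * card B) * L"
      using sum_card_dyadic_classes[OF assms(1,3), of L] sum_card_canonical_classes_le[OF assms(2), where L = L and N = N and lo = lo and hi = hi]
      unfolding Idx_def Ab_def Bb_def by (simp add: algebra_simps)
    finally show ?thesis .
  qed
  ultimately show ?thesis
    using bipartite_3hop_spanner_UN[of Idx "\<lambda>(j, k). Rb j k" "\<lambda>(j, k). Kb j k"] Kb(1)
    unfolding L_def by (auto simp: split_def)
qed

lemma le_iff_card_less_le:
  fixes X :: "'a :: linorder set"
  assumes "finite X" "x \<in> X"
  shows "c \<le> x \<longleftrightarrow> card {z \<in> X. z < c} \<le> card {z \<in> X. z < x}"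
proof
  assume "c \<le> x"
  then show "card {z \<in> X. z < c} \<le> card {z \<in> X. z < x}"
    using assms(1) by (intro card_mono) auto
next
  assume "card {z \<in> X. z < c} \<le> card {z \<in> X. z < x}"
  moreover have "card {z \<in> X. z < x} < card {z \<in> X. z < c}" if "x < c"
    using assms that by (intro psubset_card_mono) auto
  ultimately show "c \<le> x"
    by (meson not_le not_less)
qed

lemma le_iff_card_less_less_card_le:
  fixes X :: "'a :: linorder set"
  assumes "finite X" "x \<in> X"
  shows "x \<le> c \<longleftrightarrow> card {z \<in> X. z < x} < card {z \<in> X. z \<le> c}"
proof
  assume "x \<le> c"
  then show "card {z \<in> X. z < x} < card {z \<in> X. z \<le> c}"
    using assms by (intro psubset_card_mono) auto
next
  assume "card {z \<in> X. z < x} < card {z \<in> X. z \<le> c}"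
  moreover have "card {z \<in> X. z \<le> c} \<le> card {z \<in> X. z < x}" if "c < x"
    using assms(1) that by (intro card_mono) auto
  ultimately show "x \<le> c"
    by (meson not_le not_less)
qed

lemma grid_bispanner:
  fixes x ylo yhi :: "'a \<Rightarrow> real" and xlo xhi y :: "'b \<Rightarrow> real"
  assumes "finite A" "finite B"
  shows "\<exists>K. bipartite_3hop_spanner
               {(a, b) \<in> A \<times> B. xlo b \<le> x a \<and> x a \<le> xhi b \<and> ylo a \<le> y b \<and> y b \<le> yhi a} K \<and>
             card K \<le> (card A + 16 * card B) * floorlog 2 (card A)"
proof -
  define X where "X = x ` A"
  define rank where "rank c = card {z \<in> X. z < c}" for c
  have "finite X"
    using assms(1) by (simp add: X_def)
  have "card X \<le> card A"
    unfolding X_def using assms(1) by (rule card_image_le)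
  have "rank (x a) < card X" if "a \<in> A" for a
    unfolding rank_def using \<open>finite X\<close> that by (intro psubset_card_mono) (auto simp: X_def)
  moreover have "card {z \<in> X. z \<le> xhi b} \<le> card X" for b
    using \<open>finite X\<close> by (intro card_mono) auto
  ultimately obtain K where K:
    "bipartite_3hop_spanner {(a, b) \<in> A \<times> B. rank (xlo b) \<le> rank (x a) \<and>
        rank (x a) < card {z \<in> X. z \<le> xhi b} \<and> ylo a \<le> y b \<and> y b \<le> yhi a} K"
    "card K \<le> (card A + 16 * card B) * floorlog 2 (card X)"
    using dyadic_grid_bispanner[OF assms, of "\<lambda>a. rank (x a)" "card X" "\<lambda>b. card {z \<in> X. z \<le> xhi b}"
        "\<lambda>b. rank (xlo b)" ylo y yhi]
    by blast
  have "x a \<in> X" if "a \<in> A" for a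
    using that by (simp add: X_def)
  then have "{(a, b) \<in> A \<times> B. rank (xlo b) \<le> rank (x a) \<and>
        rank (x a) < card {z \<in> X. z \<le> xhi b} \<and> ylo a \<le> y b \<and> y b \<le> yhi a} =
      {(a, b) \<in> A \<times> B. xlo b \<le> x a \<and> x a \<le> xhi b \<and> ylo a \<le> y b \<and> y b \<le> yhi a}"
    unfolding rank_def
    using le_iff_card_less_le[OF \<open>finite X\<close>] le_iff_card_less_less_card_le[OF \<open>finite X\<close>]
    by blast
  moreover have "floorlog 2 (card X) \<le> floorlog 2 (card A)"
    using \<open>card X \<le> card A\<close> by (rule floorlog_mono)
  ultimately show ?thesis
    using K by (metis (no_types, lifting) mult_le_mono2 le_trans)
qed

section \<open>Vertical and horizontal segments\<close>

lemma mem_closed_segment_real_iff: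
  fixes a b x :: real
  shows "x \<in> closed_segment a b \<longleftrightarrow> min a b \<le> x \<and> x \<le> max a b"
  by (auto simp: closed_segment_eq_real_ivl)

lemma seg_points_vertical:
  "vertical s \<Longrightarrow> seg_points s = {fst (fst s)} \<times> closed_segment (snd (fst s)) (snd (snd s))"
  by (simp add: vertical_def seg_points_def closed_segment_same_fst)

lemma seg_points_horizontal:
  "horizontal s \<Longrightarrow> seg_points s = closed_segment (fst (fst s)) (fst (snd s)) \<times> {snd (fst s)}"
  by (simp add: horizontal_def seg_points_def closed_segment_same_snd)

lemma vertical_horizontal_intersect_iff:
  assumes "vertical v" "horizontal h"
  shows "seg_points v \<inter> seg_points h \<noteq> {} \<longleftrightarrow>
    min (fst (fst h)) (fst (snd h)) \<le> fst (fst v) \<and> fst (fst v) \<le> max (fst (fst h)) (fst (snd h)) \<and>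
    min (snd (fst v)) (snd (snd v)) \<le> snd (fst h) \<and> snd (fst h) \<le> max (snd (fst v)) (snd (snd v))"
  by (simp add: seg_points_vertical[OF assms(1)] seg_points_horizontal[OF assms(2)]
      Times_Int_Times mem_closed_segment_real_iff conj_ac)

lemma vertical_horizontal_bispanner:
  fixes v :: "'a \<Rightarrow> seg" and h :: "'b \<Rightarrow> seg"
  assumes "finite A" "finite B" "\<forall>a\<in>A. vertical (v a)" "\<forall>b\<in>B. horizontal (h b)"
  shows "\<exists>K. bipartite_3hop_spanner {(a, b) \<in> A \<times> B. seg_points (v a) \<inter> seg_points (h b) \<noteq> {}} K \<and>
             card K \<le> (card A + 16 * card B) * floorlog 2 (card A)"
proof -
  have "{(a, b) \<in> A \<times> B. seg_points (v a) \<inter> seg_points (h b) \<noteq> {}} =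
    {(a, b) \<in> A \<times> B.
      min (fst (fst (h b))) (fst (snd (h b))) \<le> fst (fst (v a)) \<and>
      fst (fst (v a)) \<le> max (fst (fst (h b))) (fst (snd (h b))) \<and>
      min (snd (fst (v a))) (snd (snd (v a))) \<le> snd (fst (h b)) \<and>
      snd (fst (h b)) \<le> max (snd (fst (v a))) (snd (snd (v a)))}"
    using assms(3,4) vertical_horizontal_intersect_iff by blast
  then show ?thesis
    using grid_bispanner[OF assms(1,2)] by presburger
qed

definition low_end :: "seg \<Rightarrow> real \<times> real" where
  "low_end s = (min (fst (fst s)) (fst (snd s)), min (snd (fst s)) (snd (snd s)))"

lemma low_end_mem_seg_points: "horizontal s \<or> vertical s \<Longrightarrow> low_end s \<in> seg_points s"
  by (auto simp: low_end_def seg_points_horizontal seg_points_vertical mem_closed_segment_real_iff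
      horizontal_def vertical_def)

lemma closed_segment_overlap_real:
  fixes a b c d :: real
  assumes "closed_segment a b \<inter> closed_segment c d \<noteq> {}"
  shows "min a b \<in> closed_segment c d \<or> min c d \<in> closed_segment a b"
  using assms by (auto simp: mem_closed_segment_real_iff)

lemma parallel_intersect_low_end:
  assumes "horizontal s \<and> horizontal t \<or> vertical s \<and> vertical t"
    and "seg_points s \<inter> seg_points t \<noteq> {}"
  shows "low_end s \<in> seg_points t \<or> low_end t \<in> seg_points s"
  using assms(1)
proof (elim disjE conjE)
  assume "horizontal s" "horizontal t"
  with assms(2) have "snd (fst s) = snd (fst t)"
    "closed_segment (fst (fst s)) (fst (snd s)) \<inter> closed_segment (fst (fst t)) (fst (snd t)) \<noteq> {}"
    by (auto simp: seg_points_horizontal Times_Int_Times)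
  with \<open>horizontal s\<close> \<open>horizontal t\<close> show ?thesis
    using closed_segment_overlap_real
    by (auto simp: low_end_def seg_points_horizontal horizontal_def mem_Times_iff)
next
  assume "vertical s" "vertical t"
  with assms(2) have "fst (fst s) = fst (fst t)"
    "closed_segment (snd (fst s)) (snd (snd s)) \<inter> closed_segment (snd (fst t)) (snd (snd t)) \<noteq> {}"
    by (auto simp: seg_points_vertical Times_Int_Times)
  with \<open>vertical s\<close> \<open>vertical t\<close> show ?thesis
    using closed_segment_overlap_real
    by (auto simp: low_end_def seg_points_vertical vertical_def mem_Times_iff)
qed

lemma degenerate_segment: "horizontal (p, p)" "vertical (p, p)" "seg_points (p, p) = {p}"
  by (simp_all add: horizontal_def vertical_def seg_points_def)

section \<open>Hop spanners of the intersection graph\<close>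

definition undirected_edges :: "('a \<times> 'a) set \<Rightarrow> 'a set set" where
  "undirected_edges K = (\<lambda>(a, b). {a, b}) ` (K - Id)"

lemma card_undirected_edges_le: "finite K \<Longrightarrow> card (undirected_edges K) \<le> card K"
  unfolding undirected_edges_def
  by (meson card_image_le card_mono Diff_subset finite_Diff le_trans)

lemma hop_reach_Suc_cons: "hop_reach H k x v \<Longrightarrow> u = x \<or> {u, x} \<in> H \<Longrightarrow> hop_reach H (Suc k) u v"
  by (cases "u = x") auto

lemma hop_reach_3:
  assumes "x1 = x2 \<or> {x1, x2} \<in> H" "x2 = x3 \<or> {x2, x3} \<in> H" "x3 = x4 \<or> {x3, x4} \<in> H"
  shows "hop_reach H 3 x1 x4"
proof -
  have "hop_reach H (Suc (Suc (Suc 0))) x1 x4"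
    using assms by (intro hop_reach_Suc_cons[of _ _ x2] hop_reach_Suc_cons[of _ _ x3]
        hop_reach_Suc_cons[of _ _ x4]) simp_all
  then show ?thesis
    by (simp add: numeral_3_eq_3)
qed

lemma is_hop_spanner_undirected_edges:
  assumes K: "bipartite_3hop_spanner R K"
    and "\<forall>a b. (a, b) \<in> R \<longrightarrow> a \<noteq> b \<longrightarrow> {a, b} \<in> E"
    and "\<forall>u v. {u, v} \<in> E \<longrightarrow> (u, v) \<in> R \<or> (v, u) \<in> R"
  shows "is_hop_spanner E 3 (undirected_edges K)"
proof -
  let ?H = "undirected_edges K"
  have "K \<subseteq> R"
    using K by (simp add: bipartite_3hop_spanner_def)
  have step: "a = b \<or> {a, b} \<in> ?H" "b = a \<or> {b, a} \<in> ?H" if "(a, b) \<in> K" for a b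
    using that by (auto simp: undirected_edges_def insert_commute)
  have "hop_reach ?H 3 a b \<and> hop_reach ?H 3 b a" if ab: "(a, b) \<in> R" for a b
  proof -
    obtain a' b' where "(a, b') \<in> K" "(a', b') \<in> K" "(a', b) \<in> K"
      using K ab unfolding bipartite_3hop_spanner_def by blast
    then show ?thesis
      using step hop_reach_3 by metis
  qed
  moreover have "?H \<subseteq> E"
    using \<open>K \<subseteq> R\<close> assms(2) by (auto simp: undirected_edges_def)
  ultimately show ?thesis
    using assms(3) unfolding is_hop_spanner_def by blast
qed

text \<open>An overlap of parallel segments is recorded as the low end of one lying on the other.
  Segments that are points count as horizontal.\<close>
definition axis_incidences :: "nat \<Rightarrow> (nat \<Rightarrow> seg) \<Rightarrow> (nat \<times> nat) set" where
  "axis_incidences n s =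
     {(a, b). a < n \<and> b < n \<and> \<not> horizontal (s a) \<and> horizontal (s b) \<and>
        seg_points (s a) \<inter> seg_points (s b) \<noteq> {}} \<union>
     {(a, b). a < n \<and> b < n \<and> horizontal (s a) \<and> horizontal (s b) \<and> low_end (s a) \<in> seg_points (s b)} \<union>
     {(a, b). a < n \<and> b < n \<and> \<not> horizontal (s a) \<and> \<not> horizontal (s b) \<and> low_end (s b) \<in> seg_points (s a)}"

lemma axis_incidences_intersect:
  assumes "\<forall>i<n. horizontal (s i) \<or> vertical (s i)" "(a, b) \<in> axis_incidences n s"
  shows "a < n \<and> b < n \<and> seg_points (s a) \<inter> seg_points (s b) \<noteq> {}"
  using assms low_end_mem_seg_points unfolding axis_incidences_def by blast

lemma isect_edges_in_axis_incidences:
  assumes "\<forall>i<n. horizontal (s i) \<or> vertical (s i)" "{u, v} \<in> isect_edges n s"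
  shows "(u, v) \<in> axis_incidences n s \<or> (v, u) \<in> axis_incidences n s"
proof -
  have "(a, b) \<in> axis_incidences n s \<or> (b, a) \<in> axis_incidences n s"
    if "a < n" "b < n" "seg_points (s a) \<inter> seg_points (s b) \<noteq> {}" for a b
  proof (cases "horizontal (s a) = horizontal (s b)")
    case True
    then have "horizontal (s a) \<and> horizontal (s b) \<or> vertical (s a) \<and> vertical (s b)"
      using assms(1) that(1,2) by blast
    then have "low_end (s a) \<in> seg_points (s b) \<or> low_end (s b) \<in> seg_points (s a)"
      using that(3) by (rule parallel_intersect_low_end)
    then show ?thesis
      using True that(1,2) unfolding axis_incidences_def by auto
  next
    case False
    then show ?thesis
      using that unfolding axis_incidences_def by (auto simp: Int_commute)
  qed
  moreover obtain i j where "{u, v} = {i, j}" "i < n" "j < n" "seg_points (s i) \<inter> seg_points (s j) \<noteq> {}"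
    using assms(2) unfolding isect_edges_def by blast
  ultimately show ?thesis
    by (metis doubleton_eq_iff)
qed

lemma axis_incidences_bispanner:
  assumes "\<forall>i<n. horizontal (s i) \<or> vertical (s i)"
  shows "\<exists>K. bipartite_3hop_spanner (axis_incidences n s) K \<and> card K \<le> 51 * n * floorlog 2 n"
proof -
  define Hs where "Hs = {i. i < n \<and> horizontal (s i)}"
  define Vs where "Vs = {i. i < n \<and> \<not> horizontal (s i)}"
  define pt where "pt i = (low_end (s i), low_end (s i))" for i
  have fin: "finite Hs" "finite Vs"
    by (simp_all add: Hs_def Vs_def)
  have "\<forall>i\<in>Hs. horizontal (s i)" "\<forall>i\<in>Vs. vertical (s i)" "\<forall>i. horizontal (pt i) \<and> vertical (pt i)"
    using assms by (auto simp: Hs_def Vs_def pt_def degenerate_segment)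
  then obtain K1 K2 K3 where
    K1: "bipartite_3hop_spanner {(a, b) \<in> Vs \<times> Hs. seg_points (s a) \<inter> seg_points (s b) \<noteq> {}} K1"
        "card K1 \<le> (card Vs + 16 * card Hs) * floorlog 2 (card Vs)" and
    K2: "bipartite_3hop_spanner {(a, b) \<in> Hs \<times> Hs. seg_points (pt a) \<inter> seg_points (s b) \<noteq> {}} K2"
        "card K2 \<le> (card Hs + 16 * card Hs) * floorlog 2 (card Hs)" and
    K3: "bipartite_3hop_spanner {(a, b) \<in> Vs \<times> Vs. seg_points (s a) \<inter> seg_points (pt b) \<noteq> {}} K3"
        "card K3 \<le> (card Vs + 16 * card Vs) * floorlog 2 (card Vs)"
    using vertical_horizontal_bispanner[OF fin(2) fin(1), of s s]
      vertical_horizontal_bispanner[OF fin(1) fin(1), of pt s]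
      vertical_horizontal_bispanner[OF fin(2) fin(2), of s pt]
    by meson
  have "axis_incidences n s =
      {(a, b) \<in> Vs \<times> Hs. seg_points (s a) \<inter> seg_points (s b) \<noteq> {}} \<union>
      {(a, b) \<in> Hs \<times> Hs. seg_points (pt a) \<inter> seg_points (s b) \<noteq> {}} \<union>
      {(a, b) \<in> Vs \<times> Vs. seg_points (s a) \<inter> seg_points (pt b) \<noteq> {}}"
    by (auto simp: axis_incidences_def Hs_def Vs_def pt_def degenerate_segment)
  then have "bipartite_3hop_spanner (axis_incidences n s) (K1 \<union> K2 \<union> K3)"
    using K1(1) K2(1) K3(1) by (simp add: bipartite_3hop_spanner_Un)
  moreover have "card (K1 \<union> K2 \<union> K3) \<le> 51 * n * floorlog 2 n"
  proof -
    have bound: "(card X + 16 * card Y) * floorlog 2 (card X) \<le> 17 * n * floorlog 2 n"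
      if "X \<subseteq> {..<n}" "Y \<subseteq> {..<n}" for X Y :: "nat set"
    proof -
      have "card X \<le> n" "card Y \<le> n"
        using that card_mono[of "{..<n}"] by fastforce+
      then show ?thesis
        by (intro mult_le_mono floorlog_mono) auto
    qed
    have "Hs \<subseteq> {..<n}" "Vs \<subseteq> {..<n}"
      by (auto simp: Hs_def Vs_def)
    then have "card K1 \<le> 17 * n * floorlog 2 n" "card K2 \<le> 17 * n * floorlog 2 n"
        "card K3 \<le> 17 * n * floorlog 2 n"
      using K1(2) K2(2) K3(2) bound by (meson le_trans)+
    then show ?thesis
      using card_Un_le[of "K1 \<union> K2" K3] card_Un_le[of K1 K2] by linarith
  qed
  ultimately show ?thesis
    by blast
qed

lemma isect_edges_hop_spanner:
  assumes "\<forall>i<n. horizontal (s i) \<or> vertical (s i)"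
  shows "\<exists>H. is_hop_spanner (isect_edges n s) 3 H \<and> card H \<le> 51 * n * floorlog 2 n"
proof -
  obtain K where K: "bipartite_3hop_spanner (axis_incidences n s) K" "card K \<le> 51 * n * floorlog 2 n"
    using axis_incidences_bispanner[OF assms] by blast
  have "K \<subseteq> {..<n} \<times> {..<n}"
    using K(1) axis_incidences_intersect[OF assms] unfolding bipartite_3hop_spanner_def by fast
  then have "card (undirected_edges K) \<le> card K"
    by (intro card_undirected_edges_le finite_subset[of K]) auto
  moreover have "is_hop_spanner (isect_edges n s) 3 (undirected_edges K)"
  proof (rule is_hop_spanner_undirected_edges[OF K(1)])
    show "\<forall>a b. (a, b) \<in> axis_incidences n s \<longrightarrow> a \<noteq> b \<longrightarrow> {a, b} \<in> isect_edges n s"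
      using axis_incidences_intersect[OF assms] unfolding isect_edges_def by blast
    show "\<forall>u v. {u, v} \<in> isect_edges n s \<longrightarrow> (u, v) \<in> axis_incidences n s \<or> (v, u) \<in> axis_incidences n s"
      using isect_edges_in_axis_incidences[OF assms] by blast
  qed
  ultimately show ?thesis
    using K(2) le_trans by blast
qed

lemma floorlog_2_le_ln:
  assumes "2 \<le> n"
  shows "real (floorlog 2 n) \<le> 2 / ln 2 * ln (real n)"
proof -
  have "1 \<le> log 2 (real n)"
    using assms by simp
  moreover have "real (floorlog 2 n) = real (nat \<lfloor>log 2 (real n)\<rfloor>) + 1"
    using assms by (simp add: floorlog_def)
  moreover have "real (nat \<lfloor>log 2 (real n)\<rfloor>) \<le> log 2 (real n)"
    using \<open>1 \<le> log 2 (real n)\<close> by linarith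
  ultimately have "real (floorlog 2 n) \<le> 2 * log 2 (real n)"
    by linarith
  then show ?thesis
    by (simp add: log_def)
qed

theorem lemma19:
  shows "\<exists>C::real. \<forall>(n::nat) (s::nat \<Rightarrow> seg).
           (\<forall>i<n. horizontal (s i) \<or> vertical (s i)) \<longrightarrow>
           (\<exists>H. is_hop_spanner (isect_edges n s) 3 H \<and>
                 real (card H) \<le> C * real n * ln (real n))"
proof (intro exI[of _ "102 / ln 2"] allI impI)
  fix n :: nat and s :: "nat \<Rightarrow> seg"
  assume "\<forall>i<n. horizontal (s i) \<or> vertical (s i)"
  then obtain H where H: "is_hop_spanner (isect_edges n s) 3 H" "card H \<le> 51 * n * floorlog 2 n"
    using isect_edges_hop_spanner by blast
  have "real (card H) \<le> 102 / ln 2 * real n * ln (real n)"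
  proof (cases "2 \<le> n")
    case True
    have "real (card H) \<le> 51 * real n * real (floorlog 2 n)"
      using H(2) by (metis of_nat_le_iff of_nat_mult of_nat_numeral)
    also have "\<dots> \<le> 51 * real n * (2 / ln 2 * ln (real n))"
      using floorlog_2_le_ln[OF True] by (intro mult_left_mono) auto
    finally show ?thesis
      by simp
  next
    case False
    then have "H = {}"
      using H(1) by (auto simp: is_hop_spanner_def isect_edges_def)
    with False show ?thesis
      by (cases n) auto
  qed
  with H(1) show "\<exists>H. is_hop_spanner (isect_edges n s) 3 H \<and>
      real (card H) \<le> 102 / ln 2 * real n * ln (real n)"
    by blast
qed

end
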